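(* Let $(\mathcal{X},d)$ be a finite metric space, $P$ a probability distribution on $\mathcal{X}$, $A\subseteq\mathcal{X}$ a nonempty set of allowable points, and $k\ge1$ an integer. Let $O$ be an optimal $k$-RRP solution, i.e., a $k$-multiset of points of $A$ minimizing $\mathbb{E}_{X\sim P_k}[d_k(O,X)]$ among all $k$-multisets of points of $A$. Let $S\sim P_k$ be a random $k$-multiset and, for each $S$, let $T(S)$ be a $k$-multiset of points of $A$ minimizing $d_k(S,T(S))$ (algorithm RRP returns $T(S)$). Then $$\mathbb{E}_{S\sim P_k}\mathbb{E}_{X\sim P_k}[d_k(T(S),X)]\le 3\cdot \mathbb{E}_{X\sim P_k}[d_k(O,X)].$$
   Context: For multisets $U,V$ of exactly $k$ points of $\mathcal{X}$, $d_k(U,V)$ is the minimum, over perfect matchings between the $k$ elements of $U$ and the $k$ elements of $V$ (with multiplicity), of the sum of the distances of matched pairs. $P_k$ is the distribution of the multiset of $k$ points of $\mathcal{X}$ drawn i.i.d. from $P$. *)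

theory Defs
  imports "HOL-Probability.Probability" "HOL-Library.Multiset"
begin

definition finite_metric_space :: "'a set \<Rightarrow> ('a \<Rightarrow> 'a \<Rightarrow> real) \<Rightarrow> bool" where
  "finite_metric_space X d \<longleftrightarrow> finite X \<and>
     (\<forall>x\<in>X. \<forall>y\<in>X. d x y = 0 \<longleftrightarrow> x = y) \<and>
     (\<forall>x\<in>X. \<forall>y\<in>X. d x y = d y x) \<and>
     (\<forall>x\<in>X. \<forall>y\<in>X. \<forall>z\<in>X. d x z \<le> d x y + d y z)"

definition matching_cost :: "('a \<Rightarrow> 'a \<Rightarrow> real) \<Rightarrow> 'a multiset \<Rightarrow> 'a multiset \<Rightarrow> real" where
  "matching_cost d U V = Min {(\<Sum>p\<in>#M. d (fst p) (snd p)) | M.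
       image_mset fst M = U \<and> image_mset snd M = V}"

fun multiset_pmf :: "'a pmf \<Rightarrow> nat \<Rightarrow> 'a multiset pmf" where
  "multiset_pmf P 0 = return_pmf {#}"
| "multiset_pmf P (Suc k) =
     bind_pmf P (\<lambda>x. bind_pmf (multiset_pmf P k) (\<lambda>M. return_pmf (add_mset x M)))"

end

theory Submission imports Defs begin

text \<open>The matching distance is a pseudometric on multisets of equal size over X: swapping the
  pairs of a matching shows symmetry, and composing a matching of U with V and one of V with W
  (matching each pair (u, v) with a pair (v, w)) shows the triangle inequality.  For samples S, Y
  this gives d(T S, Y) \<le> d(S, T S) + d(S, Y) \<le> d(S, Opt) + d(S, Opt) + d(Opt, Y), because T S is at
  least as close to S as Opt.  Taking expectations over S and Y, which have the same law, gives
  the factor 3.\<close>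

definition matchings :: "'a multiset \<Rightarrow> 'b multiset \<Rightarrow> ('a \<times> 'b) multiset set" where
  "matchings U V = {M. image_mset fst M = U \<and> image_mset snd M = V}"

definition matching_weight :: "('a \<Rightarrow> 'b \<Rightarrow> real) \<Rightarrow> ('a \<times> 'b) multiset \<Rightarrow> real" where
  "matching_weight d M = (\<Sum>p\<in>#M. d (fst p) (snd p))"

lemma matching_cost_eq_Min: "matching_cost d U V = Min (matching_weight d ` matchings U V)"
  unfolding matching_cost_def matchings_def matching_weight_def by (simp add: setcompr_eq_image)

lemma finite_matchings: "finite (matchings U V)"
proof (rule finite_subset)
  show "matchings U V \<subseteq> multisets_of_size (set_mset U \<times> set_mset V) (size U)"
    unfolding matchings_def multisets_of_size_def by force
qed (simp add: finite_multisets_of_size)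

lemma matchings_nonempty:
  assumes "size U = size V"
  shows "matchings U V \<noteq> {}"
proof -
  obtain xs ys where xs: "mset xs = U" and ys: "mset ys = V" by (metis ex_mset)
  then have "length xs = length ys" using assms by auto
  then have "mset (zip xs ys) \<in> matchings U V"
    unfolding matchings_def using xs ys by (simp flip: mset_map)
  then show ?thesis by auto
qed

lemma matching_cost_le:
  "M \<in> matchings U V \<Longrightarrow> matching_cost d U V \<le> matching_weight d M"
  unfolding matching_cost_eq_Min by (simp add: finite_matchings)

lemma matching_cost_attained:
  assumes "size U = size V"
  obtains M where "M \<in> matchings U V" "matching_cost d U V = matching_weight d M"
proof -
  have "matching_cost d U V \<in> matching_weight d ` matchings U V"
    unfolding matching_cost_eq_Min using finite_matchings matchings_nonempty[OF assms]
    by (intro Min_in) auto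
  with that show ?thesis by blast
qed

lemma matchings_swap: "matchings V U = image_mset prod.swap ` matchings U V"
proof (intro set_eqI iffI)
  fix M assume "M \<in> matchings V U"
  then have "image_mset prod.swap M \<in> matchings U V"
    by (simp add: matchings_def multiset.map_comp comp_def)
  moreover have "M = image_mset prod.swap (image_mset prod.swap M)"
    by (simp add: multiset.map_comp comp_def)
  ultimately show "M \<in> image_mset prod.swap ` matchings U V" by blast
qed (auto simp: matchings_def multiset.map_comp comp_def)

lemma matching_cost_commute:
  assumes sym: "\<And>x y. x \<in># U \<Longrightarrow> y \<in># V \<Longrightarrow> d x y = d y x"
  shows "matching_cost d V U = matching_cost d U V"
proof -
  have "matching_weight d (image_mset prod.swap M) = matching_weight d M"
    if "M \<in> matchings U V" for M
  proof -
    have "d (snd p) (fst p) = d (fst p) (snd p)" if "p \<in># M" for p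
      using sym \<open>M \<in> matchings U V\<close> \<open>p \<in># M\<close> unfolding matchings_def by force
    then show ?thesis
      unfolding matching_weight_def by (auto simp: multiset.map_comp comp_def
          intro!: arg_cong[where f = sum_mset] image_mset_cong)
  qed
  then have "matching_weight d ` image_mset prod.swap ` matchings U V = matching_weight d ` matchings U V"
    by (simp add: image_image cong: image_cong)
  then show ?thesis
    unfolding matching_cost_eq_Min matchings_swap[of V U] by simp
qed

lemma matching_compose:
  fixes d :: "'a \<Rightarrow> 'a \<Rightarrow> real"
  assumes "M1 \<in> matchings U V" "M2 \<in> matchings V W"
    and tri: "\<And>x y z. x \<in> X \<Longrightarrow> y \<in> X \<Longrightarrow> z \<in> X \<Longrightarrow> d x z \<le> d x y + d y z"
    and "set_mset U \<subseteq> X" "set_mset V \<subseteq> X" "set_mset W \<subseteq> X"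
  shows "\<exists>M3\<in>matchings U W. matching_weight d M3 \<le> matching_weight d M1 + matching_weight d M2"
  using assms(1,2,4-6)
proof (induction M1 arbitrary: U V W M2)
  case empty
  then have "M2 = {#}" by (simp add: matchings_def)
  with empty show ?case by (auto simp: matchings_def matching_weight_def)
next
  case (add p1 M1)
  have U: "U = add_mset (fst p1) (image_mset fst M1)"
    and V: "V = add_mset (snd p1) (image_mset snd M1)"
    using add.prems(1) by (auto simp: matchings_def)
  have "snd p1 \<in># image_mset fst M2"
    using add.prems(2) V by (simp add: matchings_def)
  then obtain p2 where p2: "p2 \<in># M2" "fst p2 = snd p1" by auto
  define M2' where "M2' = M2 - {#p2#}"
  have M2: "M2 = add_mset p2 M2'" using p2(1) by (simp add: M2'_def)
  have W: "W = add_mset (snd p2) (image_mset snd M2')"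
    using add.prems(2) by (simp add: matchings_def M2)
  have "image_mset fst M2' = image_mset snd M1"
    using add.prems(2) V p2(2) by (simp add: matchings_def M2)
  then have "\<exists>M3\<in>matchings (image_mset fst M1) (image_mset snd M2').
      matching_weight d M3 \<le> matching_weight d M1 + matching_weight d M2'"
    by (intro add.IH) (use add.prems(3-5) U V W in \<open>auto simp: matchings_def\<close>)
  then obtain M3 where M3: "M3 \<in> matchings (image_mset fst M1) (image_mset snd M2')"
    "matching_weight d M3 \<le> matching_weight d M1 + matching_weight d M2'"
    by blast
  have "d (fst p1) (snd p2) \<le> d (fst p1) (snd p1) + d (fst p2) (snd p2)"
    using tri add.prems(3-5) U V W p2(2) by simp
  with M3(2) have "matching_weight d (add_mset (fst p1, snd p2) M3)
      \<le> matching_weight d (add_mset p1 M1) + matching_weight d M2"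
    by (simp add: matching_weight_def M2)
  moreover have "add_mset (fst p1, snd p2) M3 \<in> matchings U W"
    using M3(1) U W by (simp add: matchings_def)
  ultimately show ?case by blast
qed

lemma matching_cost_triangle:
  fixes d :: "'a \<Rightarrow> 'a \<Rightarrow> real"
  assumes "size U = size V" "size V = size W"
    and tri: "\<And>x y z. x \<in> X \<Longrightarrow> y \<in> X \<Longrightarrow> z \<in> X \<Longrightarrow> d x z \<le> d x y + d y z"
    and "set_mset U \<subseteq> X" "set_mset V \<subseteq> X" "set_mset W \<subseteq> X"
  shows "matching_cost d U W \<le> matching_cost d U V + matching_cost d V W"
proof -
  obtain M1 where M1: "M1 \<in> matchings U V" "matching_cost d U V = matching_weight d M1"
    using matching_cost_attained[OF assms(1)] .
  obtain M2 where M2: "M2 \<in> matchings V W" "matching_cost d V W = matching_weight d M2"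
    using matching_cost_attained[OF assms(2)] .
  have "\<exists>M3\<in>matchings U W. matching_weight d M3 \<le> matching_weight d M1 + matching_weight d M2"
    by (rule matching_compose[OF M1(1) M2(1) _ assms(4-6)]) (rule tri)
  then obtain M3 where M3:
    "M3 \<in> matchings U W" "matching_weight d M3 \<le> matching_weight d M1 + matching_weight d M2"
    by blast
  show ?thesis using matching_cost_le[OF M3(1), of d] M3(2) M1(2) M2(2) by linarith
qed

lemma dist_from_closer_point:
  fixes c :: "'b \<Rightarrow> 'b \<Rightarrow> real"
  assumes sym: "\<And>x y. x \<in> Ms \<Longrightarrow> y \<in> Ms \<Longrightarrow> c x y = c y x"
    and tri: "\<And>x y z. x \<in> Ms \<Longrightarrow> y \<in> Ms \<Longrightarrow> z \<in> Ms \<Longrightarrow> c x z \<le> c x y + c y z"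
    and mem: "S \<in> Ms" "T \<in> Ms" "Z \<in> Ms" "Y \<in> Ms"
    and closer: "c S T \<le> c S Z"
  shows "c T Y \<le> 2 * c Z S + c Z Y"
proof -
  have "c T Y \<le> c T S + c S Y" using tri mem by blast
  also have "\<dots> \<le> c S Z + (c S Z + c Z Y)" using sym[of T S] tri[of S Z Y] closer mem by simp
  also have "\<dots> = 2 * c Z S + c Z Y" using sym[of S Z] mem by simp
  finally show ?thesis .
qed

lemma multiset_pmf_support:
  "S \<in> set_pmf (multiset_pmf P k) \<Longrightarrow> size S = k \<and> set_mset S \<subseteq> set_pmf P"
  by (induction k arbitrary: S) fastforce+

lemma finite_set_multiset_pmf:
  "finite (set_pmf P) \<Longrightarrow> finite (set_pmf (multiset_pmf P k))"
  by (induction k) auto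

lemma expectation_expectation_le_add:
  fixes f :: "'a \<Rightarrow> 'a \<Rightarrow> real"
  assumes fin: "finite (set_pmf Q)"
    and le: "\<And>S Y. S \<in> set_pmf Q \<Longrightarrow> Y \<in> set_pmf Q \<Longrightarrow> f S Y \<le> g S + h Y"
  shows "measure_pmf.expectation Q (\<lambda>S. measure_pmf.expectation Q (f S))
    \<le> measure_pmf.expectation Q g + measure_pmf.expectation Q h"
proof -
  note int = integrable_measure_pmf_finite[OF fin]
  have "measure_pmf.expectation Q (\<lambda>S. measure_pmf.expectation Q (f S))
      \<le> measure_pmf.expectation Q (\<lambda>S. measure_pmf.expectation Q (\<lambda>Y. g S + h Y))"
    using le by (intro integral_mono_AE[OF int int] AE_pmfI) blast
  also have "\<dots> = measure_pmf.expectation Q (\<lambda>S. g S + measure_pmf.expectation Q h)"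
    by (simp add: Bochner_Integration.integral_add[OF int int] measure_pmf.prob_space)
  also have "\<dots> = measure_pmf.expectation Q g + measure_pmf.expectation Q h"
    by (simp add: Bochner_Integration.integral_add[OF int int] measure_pmf.prob_space)
  finally show ?thesis .
qed

theorem theorem6:
  fixes X A :: "'a set" and d :: "'a \<Rightarrow> 'a \<Rightarrow> real" and P :: "'a pmf" and k :: nat
    and Opt :: "'a multiset" and T :: "'a multiset \<Rightarrow> 'a multiset"
  assumes metric: "finite_metric_space X d"
    and P_X: "set_pmf P \<subseteq> X"
    and A_sub: "A \<subseteq> X" and A_ne: "A \<noteq> {}"
    and k: "k \<ge> 1"
    and O_adm: "set_mset Opt \<subseteq> A" "size Opt = k"
    and O_opt: "\<And>Opt'. set_mset Opt' \<subseteq> A \<Longrightarrow> size Opt' = k \<Longrightarrow>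
        measure_pmf.expectation (multiset_pmf P k) (\<lambda>Y. matching_cost d Opt Y)
          \<le> measure_pmf.expectation (multiset_pmf P k) (\<lambda>Y. matching_cost d Opt' Y)"
    and T_adm: "\<And>S. S \<in> set_pmf (multiset_pmf P k) \<Longrightarrow> set_mset (T S) \<subseteq> A \<and> size (T S) = k"
    and T_opt: "\<And>S T'. S \<in> set_pmf (multiset_pmf P k) \<Longrightarrow> set_mset T' \<subseteq> A \<Longrightarrow> size T' = k \<Longrightarrow>
        matching_cost d S (T S) \<le> matching_cost d S T'"
  shows "measure_pmf.expectation (multiset_pmf P k)
           (\<lambda>S. measure_pmf.expectation (multiset_pmf P k) (\<lambda>Y. matching_cost d (T S) Y))
         \<le> 3 * measure_pmf.expectation (multiset_pmf P k) (\<lambda>Y. matching_cost d Opt Y)"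
proof -
  let ?Q = "multiset_pmf P k" and ?Ms = "{U. size U = k \<and> set_mset U \<subseteq> X}"
  have "finite X" and sym: "\<And>x y. x \<in> X \<Longrightarrow> y \<in> X \<Longrightarrow> d x y = d y x"
    and tri: "\<And>x y z. x \<in> X \<Longrightarrow> y \<in> X \<Longrightarrow> z \<in> X \<Longrightarrow> d x z \<le> d x y + d y z"
    using metric unfolding finite_metric_space_def by blast+
  have sym_Ms: "matching_cost d U V = matching_cost d V U" if "U \<in> ?Ms" "V \<in> ?Ms" for U V
    using that by (intro matching_cost_commute) (auto intro: sym)
  have tri_Ms: "matching_cost d U W \<le> matching_cost d U V + matching_cost d V W"
    if "U \<in> ?Ms" "V \<in> ?Ms" "W \<in> ?Ms" for U V W
    using that by (intro matching_cost_triangle[OF _ _ tri]) auto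
  have support_Ms: "S \<in> ?Ms" if "S \<in> set_pmf ?Q" for S
    using multiset_pmf_support[OF that] P_X by auto
  have Opt_Ms: "Opt \<in> ?Ms" using O_adm A_sub by auto
  have closer: "matching_cost d (T S) Y \<le> 2 * matching_cost d Opt S + matching_cost d Opt Y"
    if S: "S \<in> set_pmf ?Q" and Y: "Y \<in> set_pmf ?Q" for S Y
  proof (rule dist_from_closer_point[OF sym_Ms tri_Ms])
    show "T S \<in> ?Ms" using T_adm[OF S] A_sub by auto
    show "matching_cost d S (T S) \<le> matching_cost d S Opt" using T_opt[OF S O_adm] .
  qed (use support_Ms S Y Opt_Ms in auto)
  have "finite (set_pmf ?Q)"
    using finite_set_multiset_pmf finite_subset[OF P_X \<open>finite X\<close>] by blast
  then have "measure_pmf.expectation ?Q (\<lambda>S. measure_pmf.expectation ?Q (matching_cost d (T S)))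
      \<le> measure_pmf.expectation ?Q (\<lambda>S. 2 * matching_cost d Opt S)
        + measure_pmf.expectation ?Q (matching_cost d Opt)"
    using closer by (rule expectation_expectation_le_add)
  also have "\<dots> = 3 * measure_pmf.expectation ?Q (matching_cost d Opt)"
    by simp
  finally show ?thesis by simp
qed

end
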